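(* (i) $(\mathfrak{D},\cdot)$ is a group. (ii) The multiplication $\mathfrak{D}\times\mathfrak{D}\to\mathfrak{D}$, $(A,B)\mapsto A\cdot B$, is continuous in the Fréchet topology of $\mathfrak{D}$. (iii) The inversion $\mathfrak{D}\to\mathfrak{D}$, $A\mapsto A^{-1}$, is continuous in the Fréchet topology of $\mathfrak{D}$.
   Context: $\mathfrak{D}$ is the set of linear maps $T=\sum_{\alpha\in\mathbb{N}_0^n}q_\alpha\partial^\alpha$ on $\mathbb{R}[x_1,\dots,x_n]$ with $q_\alpha\in\mathbb{R}[x_1,\dots,x_n]_{\le|\alpha|}$ (degree $\le|\alpha|$) for all $\alpha$ and $\ker T=\{0\}$; the product is composition. Its Fréchet topology is that of coordinate-wise convergence of the coefficients $c_{\alpha,\beta}$ in $q_\alpha=\sum_{|\beta|\le|\alpha|}c_{\alpha,\beta}x^\beta$. *)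

theory Defs
  imports "HOL-Analysis.Analysis" "HOL-Algebra.Group"
begin

(* Variables x_i are indexed by a finite type 'n (so n = CARD('n)).
   A multi-index is a function 'n => nat; a polynomial in R[x_1..x_n] is its
   coefficient function (multi-index => real) with finite support. *)

type_synonym 'n mi = "'n \<Rightarrow> nat"

definition mdeg :: "('n::finite) mi \<Rightarrow> nat" where
  "mdeg a = (\<Sum>i\<in>UNIV. a i)"

definition polys :: "(('n::finite) mi \<Rightarrow> real) set" where
  "polys = {p. finite {a. p a \<noteq> 0}}"

definition pmult :: "(('n::finite) mi \<Rightarrow> real) \<Rightarrow> ('n mi \<Rightarrow> real) \<Rightarrow> 'n mi \<Rightarrow> real" where
  "pmult p q g = (\<Sum>a\<in>{a. a \<le> g}. p a * q (\<lambda>i. g i - a i))"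

(* partial derivative d^alpha: d^alpha x^(g+alpha) = prod_i (g_i+alpha_i)!/g_i! x^g *)
definition pder :: "('n::finite) mi \<Rightarrow> ('n mi \<Rightarrow> real) \<Rightarrow> 'n mi \<Rightarrow> real" where
  "pder a p g = (\<Prod>i\<in>UNIV. real (fact (g i + a i)) / real (fact (g i))) * p (\<lambda>i. g i + a i)"

(* Operator T = sum_alpha q_alpha d^alpha with q_alpha = sum_beta c alpha beta x^beta,
   applied to a polynomial p; only the (finitely many) alpha below some monomial
   of p contribute. *)
definition dop :: "(('n::finite) mi \<Rightarrow> 'n mi \<Rightarrow> real) \<Rightarrow> ('n mi \<Rightarrow> real) \<Rightarrow> 'n mi \<Rightarrow> real" where
  "dop c p g = (\<Sum>a\<in>{a. \<exists>b. p b \<noteq> 0 \<and> a \<le> b}. pmult (c a) (pder a p) g)"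

definition Dset :: "(('n::finite) mi \<Rightarrow> 'n mi \<Rightarrow> real) set" where
  "Dset = {c. (\<forall>a b. c a b \<noteq> 0 \<longrightarrow> mdeg b \<le> mdeg a) \<and>
              (\<forall>p\<in>polys. dop c p = (\<lambda>_. 0) \<longrightarrow> p = (\<lambda>_. 0))}"

definition Dmul :: "(('n::finite) mi \<Rightarrow> 'n mi \<Rightarrow> real) \<Rightarrow> ('n mi \<Rightarrow> 'n mi \<Rightarrow> real) \<Rightarrow> 'n mi \<Rightarrow> 'n mi \<Rightarrow> real" where
  "Dmul c d = (THE e. e \<in> Dset \<and> (\<forall>p\<in>polys. dop e p = dop c (dop d p)))"

definition Did :: "('n::finite) mi \<Rightarrow> 'n mi \<Rightarrow> real" where
  "Did a b = (if a = (\<lambda>_. 0) \<and> b = (\<lambda>_. 0) then 1 else 0)"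

definition Dgroup :: "(('n::finite) mi \<Rightarrow> 'n mi \<Rightarrow> real) monoid" where
  "Dgroup = \<lparr>carrier = Dset, mult = Dmul, one = Did\<rparr>"

end

theory Submission
  imports Defs "HOL-Library.Function_Algebras" "Jordan_Normal_Form.Determinant"
begin

(* An operator with coefficients c acts on monomials by
     dop c x^g = (sum over a <= g of g!/(g - a)! * x^(g - a) * c_a),
   a triangular system in which c_g occurs with the nonzero factor g!. Hence c is determined
   by the images of the monomials, and conversely every family of images M g of degree at
   most |g| comes from a unique coefficient family, obtained by recursion on g. The degree
   condition ensures that the operator maps the space P_k of polynomials of degree at
   most k into itself. So the composite of two elements of D again comes from an element of
   D, and an injective operator restricts to bijections of the finite-dimensional spaces P_k,
   whose inverses (by Cramer's rule) assemble to the inverse in D. All these constructions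
   are built from the coefficients by sums, products and division by a determinant that
   does not vanish on D, which gives continuity of multiplication and inversion. *)

lemma index_mult_mat_vec_sum:
  "A \<in> carrier_mat n m \<Longrightarrow> v \<in> carrier_vec m \<Longrightarrow> i < n \<Longrightarrow> (A *\<^sub>v v) $ i = (\<Sum>j<m. A $$ (i, j) * v $ j)"
  by (simp add: scalar_prod_def atLeast0LessThan)

lemma smult_one_mat_mult_vec:
  fixes v :: "'a::comm_ring_1 vec"
  assumes "v \<in> carrier_vec n"
  shows "(a \<cdot>\<^sub>m 1\<^sub>m n) *\<^sub>v v = a \<cdot>\<^sub>v v"
proof -
  have "(a \<cdot>\<^sub>m 1\<^sub>m n) *\<^sub>v v = a \<cdot>\<^sub>v (1\<^sub>m n *\<^sub>v v)" using assms by auto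
  then show ?thesis using assms by simp
qed

lemma continuous_on_det:
  assumes "\<And>x. x \<in> S \<Longrightarrow> A x \<in> carrier_mat n n"
    and "\<And>i j. i < n \<Longrightarrow> j < n \<Longrightarrow> continuous_on S (\<lambda>x. A x $$ (i, j) :: real)"
  shows "continuous_on S (\<lambda>x. det (A x))"
proof (rule continuous_on_eq)
  show "continuous_on S (\<lambda>x. \<Sum>p | p permutes {0..<n}. signof p * (\<Prod>i = 0..<n. A x $$ (i, p i)))"
  proof (intro continuous_on_sum continuous_on_mult continuous_on_const continuous_on_prod)
    fix p i assume "p \<in> {p. p permutes {0..<n}}" "i \<in> {0..<n}"
    then have "i < n" "p i < n" using permutes_in_image by fastforce+
    then show "continuous_on S (\<lambda>x. A x $$ (i, p i))" using assms(2) by blast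
  qed
  show "(\<Sum>p | p permutes {0..<n}. signof p * (\<Prod>i = 0..<n. A x $$ (i, p i))) = det (A x)"
    if "x \<in> S" for x
    by (rule det_def'[OF assms(1)[OF that], symmetric])
qed

lemma continuous_on_adj_mat:
  assumes A: "\<And>x. x \<in> S \<Longrightarrow> A x \<in> carrier_mat n n"
    and cont: "\<And>i j. i < n \<Longrightarrow> j < n \<Longrightarrow> continuous_on S (\<lambda>x. A x $$ (i, j) :: real)"
    and ij: "i < n" "j < n"
  shows "continuous_on S (\<lambda>x. adj_mat (A x) $$ (i, j))"
proof (rule continuous_on_eq)
  show "continuous_on S (\<lambda>x. (-1) ^ (j + i) * det (mat_delete (A x) j i))"
  proof (intro continuous_on_mult continuous_on_const continuous_on_det)
    show "mat_delete (A x) j i \<in> carrier_mat (n - 1) (n - 1)" if "x \<in> S" for x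
      using A[OF that] mat_delete_carrier by blast
    fix i' j' assume i': "i' < n - 1" and j': "j' < n - 1"
    have "continuous_on S (\<lambda>x. A x $$ (if i' < j then i' else Suc i', if j' < i then j' else Suc j'))"
      using i' j' by (intro cont) auto
    then show "continuous_on S (\<lambda>x. mat_delete (A x) j i $$ (i', j'))"
    proof (rule continuous_on_eq)
      fix x assume "x \<in> S"
      then have "dim_row (A x) = n" "dim_col (A x) = n" using A by auto
      then show "A x $$ (if i' < j then i' else Suc i', if j' < i then j' else Suc j')
          = mat_delete (A x) j i $$ (i', j')"
        using i' j' by (simp add: mat_delete_def)
    qed
  qed
  show "(-1) ^ (j + i) * det (mat_delete (A x) j i) = adj_mat (A x) $$ (i, j)" if "x \<in> S" for x
    using A[OF that] ij by (simp add: adj_mat_def cofactor_def)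
qed

lemma continuous_on_coordinate2:
  "continuous_on S f \<Longrightarrow> continuous_on S (\<lambda>x. f x a b)"
  by (rule continuous_on_product_then_coordinatewise[OF continuous_on_product_then_coordinatewise])

lemma mdeg_add [simp]: "mdeg (g + a) = mdeg g + mdeg a"
  by (simp add: mdeg_def sum.distrib)

lemma mdeg_mono: "a \<le> b \<Longrightarrow> mdeg a \<le> mdeg b"
  unfolding mdeg_def le_fun_def by (intro sum_mono) auto

lemma mdeg_strict_mono: "a < b \<Longrightarrow> mdeg a < mdeg b"
proof -
  assume "a < b"
  then obtain i where "a i < b i"
    by (auto simp: less_fun_def le_fun_def not_le)
  with \<open>a < b\<close> show ?thesis
    unfolding mdeg_def by (intro sum_strict_mono_ex1) (auto simp: less_fun_def le_fun_def)
qed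

lemma mi_diff_add [simp]: "a \<le> g \<Longrightarrow> g - a + a = (g :: 'a \<Rightarrow> nat)"
  by (auto simp: le_fun_def fun_eq_iff)

lemma mi_diff_diff: "a \<le> g \<Longrightarrow> g - (g - a) = (a :: 'a \<Rightarrow> nat)"
  by (auto simp: le_fun_def fun_eq_iff)

lemma mi_le_add: "a \<le> g + (a :: 'a \<Rightarrow> nat)"
  by (auto simp: le_fun_def)

lemma mi_diff_le: "g - a \<le> (g :: 'a \<Rightarrow> nat)"
  by (auto simp: le_fun_def)

lemma mi_diff_self [simp]: "g - g = (0 :: 'a \<Rightarrow> nat)"
  by (auto simp: fun_eq_iff)

lemma mi_diff_zero [simp]: "g - 0 = (g :: 'a \<Rightarrow> nat)"
  by (auto simp: fun_eq_iff)

lemma mdeg_diff_add: "a \<le> g \<Longrightarrow> mdeg (g - a) + mdeg a = mdeg g"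
  by (metis mdeg_add mi_diff_add)

lemma mi_less_induct [case_names less]:
  fixes \<gamma> :: "('n::finite) mi"
  assumes "\<And>\<gamma>. (\<And>a. a < \<gamma> \<Longrightarrow> P a) \<Longrightarrow> P \<gamma>"
  shows "P \<gamma>"
proof (induction \<gamma> rule: measure_induct_rule[of mdeg])
  case (less \<gamma>)
  then show ?case using assms mdeg_strict_mono by blast
qed

definition mis_upto :: "nat \<Rightarrow> ('n::finite) mi set" where
  "mis_upto k = {b. mdeg b \<le> k}"

lemma finite_mis_upto [simp]: "finite (mis_upto k)"
proof -
  have "mis_upto k \<subseteq> PiE UNIV (\<lambda>_. {..k})"
  proof
    fix b assume "b \<in> mis_upto k"
    then have "b i \<le> k" for i
      unfolding mis_upto_def mdeg_def using member_le_sum[of i UNIV b] by auto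
    then show "b \<in> PiE UNIV (\<lambda>_. {..k})" by (auto simp: PiE_def extensional_def)
  qed
  then show ?thesis by (rule finite_subset) (simp add: finite_PiE)
qed

lemma finite_mi_le [simp]: "finite {a :: ('n::finite) mi. a \<le> g}"
  by (rule finite_subset[OF _ finite_mis_upto[of "mdeg g"]]) (auto simp: mis_upto_def mdeg_mono)

lemma finite_mi_less [simp]: "finite {a :: ('n::finite) mi. a < g}"
  by (rule finite_subset[OF _ finite_mi_le[of g]]) (auto dest: less_imp_le)

definition monomial :: "('n::finite) mi \<Rightarrow> 'n mi \<Rightarrow> real" where
  "monomial g = (\<lambda>h. if h = g then 1 else 0)"

definition mi_fact :: "('n::finite) mi \<Rightarrow> real" where
  "mi_fact a = (\<Prod>i\<in>UNIV. real (fact (a i)))"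

definition monomial_times :: "('n::finite) mi \<Rightarrow> ('n mi \<Rightarrow> real) \<Rightarrow> 'n mi \<Rightarrow> real" where
  "monomial_times m q = (\<lambda>g. if m \<le> g then q (g - m) else 0)"

definition polys_upto :: "nat \<Rightarrow> (('n::finite) mi \<Rightarrow> real) set" where
  "polys_upto k = {p. \<forall>b. p b \<noteq> 0 \<longrightarrow> mdeg b \<le> k}"

definition falling_fact :: "('n::finite) mi \<Rightarrow> 'n mi \<Rightarrow> real" where
  "falling_fact \<gamma> a = mi_fact \<gamma> / mi_fact (\<gamma> - a)"

lemma mi_fact_pos: "mi_fact a > 0"
  unfolding mi_fact_def by (intro prod_pos) auto

lemma mi_fact_zero [simp]: "mi_fact 0 = 1"
  by (simp add: mi_fact_def)

lemma falling_fact_zero [simp]: "falling_fact \<gamma> 0 = 1"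
  using mi_fact_pos[of \<gamma>] by (simp add: falling_fact_def)

lemma falling_fact_self [simp]: "falling_fact \<gamma> \<gamma> = mi_fact \<gamma>"
  by (simp add: falling_fact_def)

lemma monomial_times_zero [simp]: "monomial_times 0 q = q"
  by (simp add: monomial_times_def)

lemma monomial_times_zero_right [simp]: "monomial_times m 0 = 0"
  by (simp add: monomial_times_def fun_eq_iff)

lemma polys_upto_subset_polys: "polys_upto k \<subseteq> polys"
proof
  fix p assume "p \<in> polys_upto k"
  then have "{a. p a \<noteq> 0} \<subseteq> mis_upto k" by (auto simp: polys_upto_def mis_upto_def)
  then show "p \<in> polys" unfolding polys_def using finite_subset finite_mis_upto by blast
qed

lemma polys_in_polys_upto:
  assumes "p \<in> polys"
  obtains k where "p \<in> polys_upto k"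
proof
  have "finite {a. p a \<noteq> 0}" using assms by (simp add: polys_def)
  then show "p \<in> polys_upto (\<Sum>a | p a \<noteq> 0. mdeg a)"
    unfolding polys_upto_def using member_le_sum[of _ "{a. p a \<noteq> 0}" mdeg] by auto
qed

lemma zero_in_polys_upto [simp]: "0 \<in> polys_upto k"
  by (simp add: polys_upto_def)

lemma polys_upto_mono: "k \<le> l \<Longrightarrow> polys_upto k \<subseteq> polys_upto l"
  unfolding polys_upto_def by force

lemma polys_upto_vanish: "p \<in> polys_upto k \<Longrightarrow> g \<notin> mis_upto k \<Longrightarrow> p g = 0"
  by (auto simp: polys_upto_def mis_upto_def)

lemma monomial_in_polys_upto: "mdeg b \<le> k \<Longrightarrow> monomial b \<in> polys_upto k"
  by (simp add: polys_upto_def monomial_def)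

lemma monomial_in_polys: "monomial b \<in> polys"
  using monomial_in_polys_upto[OF order_refl] polys_upto_subset_polys by blast

lemma polys_upto_sum:
  assumes "\<And>b. b \<in> B \<Longrightarrow> q b \<in> polys_upto k"
  shows "(\<lambda>h. \<Sum>b\<in>B. w b * q b h) \<in> polys_upto k"
  unfolding polys_upto_def
proof (intro CollectI allI impI)
  fix h assume "(\<Sum>b\<in>B. w b * q b h) \<noteq> 0"
  then obtain b where "b \<in> B" "w b * q b h \<noteq> 0" by (rule sum.not_neutral_contains_not_neutral)
  then show "mdeg h \<le> k" using assms unfolding polys_upto_def by auto
qed

lemma polys_upto_diff: "p \<in> polys_upto k \<Longrightarrow> q \<in> polys_upto k \<Longrightarrow> p - q \<in> polys_upto k"
  unfolding polys_upto_def by force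

lemma sum_monomial_expansion:
  assumes "p \<in> polys_upto k"
  shows "(\<Sum>b\<in>mis_upto k. p b * monomial b g) = p g"
proof -
  have "(\<Sum>b\<in>mis_upto k. p b * monomial b g) = (\<Sum>b\<in>mis_upto k. if g = b then p g else 0)"
    by (intro sum.cong) (auto simp: monomial_def)
  then show ?thesis using assms by (simp add: polys_upto_vanish)
qed

lemma monomial_times_in_polys_upto:
  assumes "q \<in> polys_upto k"
  shows "monomial_times m q \<in> polys_upto (k + mdeg m)"
  unfolding polys_upto_def
proof (intro CollectI allI impI)
  fix g assume "monomial_times m q g \<noteq> 0"
  then have "m \<le> g" "q (g - m) \<noteq> 0" by (auto simp: monomial_times_def split: if_splits)
  then show "mdeg g \<le> k + mdeg m"
    using assms mdeg_diff_add[of m g] by (auto simp: polys_upto_def)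
qed

lemma pmult_altdef: "pmult p q g = (\<Sum>a | a \<le> g. p a * q (g - a))"
  by (simp add: pmult_def fun_diff_def)

lemma pder_altdef: "pder a p g = falling_fact (g + a) a * p (g + a)"
  by (simp add: pder_def falling_fact_def mi_fact_def plus_fun_def prod_dividef)

lemma pmult_monomial: "pmult q (monomial m) = monomial_times m q"
proof
  fix g
  have "pmult q (monomial m) g = (\<Sum>a | a \<le> g. if m \<le> g \<and> a = g - m then q a else 0)"
    unfolding pmult_altdef
  proof (intro sum.cong refl)
    fix a assume "a \<in> {a. a \<le> g}"
    then have "g - a = m \<longleftrightarrow> m \<le> g \<and> a = g - m"
      by (metis mem_Collect_eq mi_diff_diff mi_diff_le)
    then show "q a * monomial m (g - a) = (if m \<le> g \<and> a = g - m then q a else 0)"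
      by (auto simp: monomial_def)
  qed
  also have "\<dots> = monomial_times m q g"
    by (cases "m \<le> g") (simp_all add: monomial_times_def mi_diff_le)
  finally show "pmult q (monomial m) g = monomial_times m q g" .
qed

lemma pmult_sum:
  "finite B \<Longrightarrow> pmult q (\<lambda>h. \<Sum>b\<in>B. w b * r b h) g = (\<Sum>b\<in>B. w b * pmult q (r b) g)"
  unfolding pmult_altdef by (simp add: sum_distrib_left sum_distrib_right mult_ac sum.swap[of _ B])

lemma pmult_scale: "pmult q (\<lambda>h. w * r h) g = w * pmult q r g"
  unfolding pmult_altdef by (simp add: sum_distrib_left mult_ac)

lemma pder_monomial:
  "pder a (monomial \<gamma>) h = (if a \<le> \<gamma> then falling_fact \<gamma> a * monomial (\<gamma> - a) h else 0)"
proof -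
  have "h + a = \<gamma> \<longleftrightarrow> a \<le> \<gamma> \<and> h = \<gamma> - a"
    using mi_le_add[of a h] by auto
  then show ?thesis by (auto simp: pder_altdef monomial_def)
qed

lemma pder_expand:
  assumes "p \<in> polys_upto k"
  shows "pder a p = (\<lambda>h. \<Sum>b\<in>mis_upto k. p b * pder a (monomial b) h)"
proof
  fix h
  have "(\<Sum>b\<in>mis_upto k. p b * pder a (monomial b) h)
      = falling_fact (h + a) a * (\<Sum>b\<in>mis_upto k. p b * monomial b (h + a))"
    by (simp add: pder_altdef sum_distrib_left mult_ac)
  then show "pder a p h = (\<Sum>b\<in>mis_upto k. p b * pder a (monomial b) h)"
    by (simp add: pder_altdef sum_monomial_expansion[OF assms])
qed

lemma dop_eq_sum:
  assumes "finite A" "\<And>a b. p b \<noteq> 0 \<Longrightarrow> a \<le> b \<Longrightarrow> a \<in> A"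
  shows "dop c p g = (\<Sum>a\<in>A. pmult (c a) (pder a p) g)"
  unfolding dop_def
proof (rule sum.mono_neutral_left[OF assms(1)])
  show "{a. \<exists>b. p b \<noteq> 0 \<and> a \<le> b} \<subseteq> A" using assms(2) by blast
  show "\<forall>a\<in>A - {a. \<exists>b. p b \<noteq> 0 \<and> a \<le> b}. pmult (c a) (pder a p) g = 0"
  proof
    fix a assume "a \<in> A - {a. \<exists>b. p b \<noteq> 0 \<and> a \<le> b}"
    then have "pder a p = 0" using mi_le_add by (auto simp: fun_eq_iff pder_altdef)
    then show "pmult (c a) (pder a p) g = 0" by (simp add: pmult_altdef)
  qed
qed

lemma dop_eq_sum_mis_upto:
  "p \<in> polys_upto k \<Longrightarrow> dop c p g = (\<Sum>a\<in>mis_upto k. pmult (c a) (pder a p) g)"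
  by (rule dop_eq_sum[OF finite_mis_upto])
    (use mdeg_mono order_trans in \<open>fastforce simp: polys_upto_def mis_upto_def\<close>)

lemma dop_monomial:
  "dop c (monomial \<gamma>) = (\<lambda>g. \<Sum>a | a \<le> \<gamma>. falling_fact \<gamma> a * monomial_times (\<gamma> - a) (c a) g)"
proof
  fix g
  have "dop c (monomial \<gamma>) g = (\<Sum>a | a \<le> \<gamma>. pmult (c a) (pder a (monomial \<gamma>)) g)"
    by (rule dop_eq_sum) (auto simp: monomial_def split: if_splits)
  also have "\<dots> = (\<Sum>a | a \<le> \<gamma>. falling_fact \<gamma> a * monomial_times (\<gamma> - a) (c a) g)"
  proof (intro sum.cong refl)
    fix a assume "a \<in> {a. a \<le> \<gamma>}"
    then have "pder a (monomial \<gamma>) = (\<lambda>h. falling_fact \<gamma> a * monomial (\<gamma> - a) h)"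
      by (simp add: fun_eq_iff pder_monomial)
    then show "pmult (c a) (pder a (monomial \<gamma>)) g
        = falling_fact \<gamma> a * monomial_times (\<gamma> - a) (c a) g"
      by (simp add: pmult_scale pmult_monomial)
  qed
  finally show "dop c (monomial \<gamma>) g
      = (\<Sum>a | a \<le> \<gamma>. falling_fact \<gamma> a * monomial_times (\<gamma> - a) (c a) g)" .
qed

lemma dop_monomial_split:
  "dop c (monomial \<gamma>) g = mi_fact \<gamma> * c \<gamma> g
     + (\<Sum>a | a < \<gamma>. falling_fact \<gamma> a * monomial_times (\<gamma> - a) (c a) g)"
proof -
  have "{a. a \<le> \<gamma>} = insert \<gamma> {a. a < \<gamma>}" by auto
  then show ?thesis by (simp add: dop_monomial)
qed

lemma dop_expand:
  assumes "p \<in> polys_upto k"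
  shows "dop c p = (\<lambda>g. \<Sum>b\<in>mis_upto k. p b * dop c (monomial b) g)"
proof
  fix g
  have "dop c p g = (\<Sum>a\<in>mis_upto k. pmult (c a) (pder a p) g)"
    by (rule dop_eq_sum_mis_upto[OF assms])
  also have "\<dots> = (\<Sum>a\<in>mis_upto k. \<Sum>b\<in>mis_upto k. p b * pmult (c a) (pder a (monomial b)) g)"
    by (simp add: pder_expand[OF assms] pmult_sum)
  also have "\<dots> = (\<Sum>b\<in>mis_upto k. p b * (\<Sum>a\<in>mis_upto k. pmult (c a) (pder a (monomial b)) g))"
    by (subst sum.swap) (simp add: sum_distrib_left)
  also have "\<dots> = (\<Sum>b\<in>mis_upto k. p b * dop c (monomial b) g)"
    by (intro sum.cong refl)
      (simp add: dop_eq_sum_mis_upto[OF monomial_in_polys_upto] mis_upto_def)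
  finally show "dop c p g = (\<Sum>b\<in>mis_upto k. p b * dop c (monomial b) g)" .
qed

lemma dop_sum:
  assumes "finite B" "\<And>b. b \<in> B \<Longrightarrow> q b \<in> polys_upto k"
  shows "dop c (\<lambda>h. \<Sum>b\<in>B. w b * q b h) g = (\<Sum>b\<in>B. w b * dop c (q b) g)"
proof -
  have "dop c (\<lambda>h. \<Sum>b\<in>B. w b * q b h) g
      = (\<Sum>b'\<in>mis_upto k. (\<Sum>b\<in>B. w b * q b b') * dop c (monomial b') g)"
    by (simp add: dop_expand[OF polys_upto_sum[OF assms(2)]])
  also have "\<dots> = (\<Sum>b\<in>B. w b * (\<Sum>b'\<in>mis_upto k. q b b' * dop c (monomial b') g))"
    unfolding sum_distrib_right sum_distrib_left by (subst sum.swap) (simp add: mult_ac)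
  also have "\<dots> = (\<Sum>b\<in>B. w b * dop c (q b) g)"
    using dop_expand[OF assms(2)] by simp
  finally show ?thesis .
qed

lemma dop_diff:
  assumes "p \<in> polys_upto k" "q \<in> polys_upto k"
  shows "dop c (p - q) = dop c p - dop c q"
proof
  fix g
  show "dop c (p - q) g = (dop c p - dop c q) g"
    using dop_expand[OF polys_upto_diff[OF assms]] dop_expand[OF assms(1)] dop_expand[OF assms(2)]
    by (simp add: sum_subtractf left_diff_distrib)
qed

lemma dop_zero [simp]: "dop c 0 = 0"
  by (simp add: dop_def fun_eq_iff)

definition deg_bounded :: "(('n::finite) mi \<Rightarrow> 'n mi \<Rightarrow> real) \<Rightarrow> bool" where
  "deg_bounded c \<longleftrightarrow> (\<forall>a. c a \<in> polys_upto (mdeg a))"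

lemma Dset_iff: "c \<in> Dset \<longleftrightarrow> deg_bounded c \<and> (\<forall>p\<in>polys. dop c p = 0 \<longrightarrow> p = 0)"
  by (auto simp: Dset_def deg_bounded_def polys_upto_def zero_fun_def)

lemma dop_monomial_in_polys_upto:
  assumes "deg_bounded c"
  shows "dop c (monomial \<gamma>) \<in> polys_upto (mdeg \<gamma>)"
proof -
  have "monomial_times (\<gamma> - a) (c a) \<in> polys_upto (mdeg \<gamma>)" if "a \<le> \<gamma>" for a
    using monomial_times_in_polys_upto[of "c a" "mdeg a" "\<gamma> - a"] assms mdeg_diff_add[OF that]
    by (simp add: deg_bounded_def add.commute)
  then have "(\<lambda>g. \<Sum>a | a \<le> \<gamma>. falling_fact \<gamma> a * monomial_times (\<gamma> - a) (c a) g)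
      \<in> polys_upto (mdeg \<gamma>)"
    by (intro polys_upto_sum) simp
  then show ?thesis by (simp add: dop_monomial)
qed

lemma dop_in_polys_upto:
  assumes "deg_bounded c" "p \<in> polys_upto k"
  shows "dop c p \<in> polys_upto k"
proof -
  have "dop c (monomial b) \<in> polys_upto k" if "b \<in> mis_upto k" for b
    using dop_monomial_in_polys_upto[OF assms(1)] polys_upto_mono that
    by (fastforce simp: mis_upto_def)
  then have "(\<lambda>g. \<Sum>b\<in>mis_upto k. p b * dop c (monomial b) g) \<in> polys_upto k"
    by (rule polys_upto_sum)
  then show ?thesis by (simp add: dop_expand[OF assms(2)])
qed

lemma dop_in_polys:
  assumes "deg_bounded c" "p \<in> polys"
  shows "dop c p \<in> polys"
proof -
  obtain k where "p \<in> polys_upto k" using assms(2) by (rule polys_in_polys_upto)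
  then show ?thesis using dop_in_polys_upto[OF assms(1)] polys_upto_subset_polys by blast
qed

section \<open>Operators are determined by the images of the monomials\<close>

lemma coeffs_eqI_monomial:
  assumes "\<And>\<gamma>. dop c (monomial \<gamma>) = dop d (monomial \<gamma>)"
  shows "c = d"
proof
  fix \<gamma>
  show "c \<gamma> = d \<gamma>"
  proof (induction \<gamma> rule: mi_less_induct)
    case (less \<gamma>)
    show ?case
    proof
      fix g
      let ?R = "\<lambda>c. \<Sum>a | a < \<gamma>. falling_fact \<gamma> a * monomial_times (\<gamma> - a) (c a) g"
      have "?R c = ?R d" using less.IH by (intro sum.cong) auto
      moreover have "dop c (monomial \<gamma>) g = dop d (monomial \<gamma>) g" by (simp add: assms)
      ultimately have "mi_fact \<gamma> * c \<gamma> g = mi_fact \<gamma> * d \<gamma> g"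
        unfolding dop_monomial_split by simp
      then show "c \<gamma> g = d \<gamma> g" using mi_fact_pos[of \<gamma>] by simp
    qed
  qed
qed

lemma coeffs_eqI:
  assumes "\<And>p. p \<in> polys \<Longrightarrow> dop c p = dop d p"
  shows "c = d"
  by (rule coeffs_eqI_monomial) (simp add: assms monomial_in_polys)

(* Solves dop_monomial_split for the coefficient c g, given the image M g of x^g. *)
function op_coeffs :: "(('n::finite) mi \<Rightarrow> 'n mi \<Rightarrow> real) \<Rightarrow> 'n mi \<Rightarrow> 'n mi \<Rightarrow> real" where
  "op_coeffs M \<gamma> = (\<lambda>g. (M \<gamma> g
     - (\<Sum>a | a < \<gamma>. falling_fact \<gamma> a * monomial_times (\<gamma> - a) (op_coeffs M a) g))
     / mi_fact \<gamma>)"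
  by pat_completeness auto
termination by (relation "Wellfounded.measure (\<lambda>(M, \<gamma>). mdeg \<gamma>)") (auto intro: mdeg_strict_mono)

declare op_coeffs.simps [simp del]

lemma dop_op_coeffs_monomial: "dop (op_coeffs M) (monomial \<gamma>) = M \<gamma>"
proof
  fix g
  show "dop (op_coeffs M) (monomial \<gamma>) g = M \<gamma> g"
    using mi_fact_pos[of \<gamma>] by (simp add: dop_monomial_split op_coeffs.simps[of M \<gamma>])
qed

lemma deg_bounded_op_coeffs:
  assumes "\<And>\<gamma>. M \<gamma> \<in> polys_upto (mdeg \<gamma>)"
  shows "deg_bounded (op_coeffs M)"
  unfolding deg_bounded_def
proof
  fix \<gamma>
  show "op_coeffs M \<gamma> \<in> polys_upto (mdeg \<gamma>)"
  proof (induction \<gamma> rule: mi_less_induct)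
    case (less \<gamma>)
    let ?S = "\<lambda>g. \<Sum>a | a < \<gamma>. falling_fact \<gamma> a * monomial_times (\<gamma> - a) (op_coeffs M a) g"
    have "monomial_times (\<gamma> - a) (op_coeffs M a) \<in> polys_upto (mdeg \<gamma>)" if "a < \<gamma>" for a
      using monomial_times_in_polys_upto[OF less.IH[OF that], of "\<gamma> - a"]
        mdeg_diff_add[of a \<gamma>] that by (simp add: add.commute)
    then have S: "?S \<in> polys_upto (mdeg \<gamma>)" by (intro polys_upto_sum) simp
    show ?case unfolding polys_upto_def
    proof (intro CollectI allI impI)
      fix g assume "op_coeffs M \<gamma> g \<noteq> 0"
      then have "M \<gamma> g \<noteq> 0 \<or> ?S g \<noteq> 0" by (subst (asm) op_coeffs.simps) auto
      then show "mdeg g \<le> mdeg \<gamma>" using assms[of \<gamma>] S by (auto simp: polys_upto_def)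
    qed
  qed
qed

lemma dop_dop_expand:
  assumes "deg_bounded d" "p \<in> polys_upto k"
  shows "dop c (dop d p) g = (\<Sum>b\<in>mis_upto k. p b * dop c (dop d (monomial b)) g)"
proof -
  have "dop c (dop d p) g = dop c (\<lambda>h. \<Sum>b\<in>mis_upto k. p b * dop d (monomial b) h) g"
    by (simp add: dop_expand[OF assms(2)])
  also have "\<dots> = (\<Sum>b\<in>mis_upto k. p b * dop c (dop d (monomial b)) g)"
    by (rule dop_sum[OF finite_mis_upto])
      (use dop_in_polys_upto[OF assms(1) monomial_in_polys_upto] in \<open>simp add: mis_upto_def\<close>)
  finally show ?thesis .
qed

lemma dop_op_coeffs_comp:
  assumes "deg_bounded d" "p \<in> polys"
  shows "dop (op_coeffs (\<lambda>\<gamma>. dop c (dop d (monomial \<gamma>)))) p = dop c (dop d p)"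
proof
  fix g
  obtain k where k: "p \<in> polys_upto k" using polys_in_polys_upto[OF assms(2)] .
  show "dop (op_coeffs (\<lambda>\<gamma>. dop c (dop d (monomial \<gamma>)))) p g = dop c (dop d p) g"
    using dop_expand[OF k, of "op_coeffs (\<lambda>\<gamma>. dop c (dop d (monomial \<gamma>)))"]
    by (simp add: dop_op_coeffs_monomial dop_dop_expand[OF assms(1) k])
qed

lemma op_coeffs_comp_in_Dset:
  assumes c: "c \<in> Dset" and d: "d \<in> Dset"
  shows "op_coeffs (\<lambda>\<gamma>. dop c (dop d (monomial \<gamma>))) \<in> Dset"
  unfolding Dset_iff
proof (intro conjI ballI impI)
  have "deg_bounded c" "deg_bounded d" using c d by (simp_all add: Dset_iff)
  then show "deg_bounded (op_coeffs (\<lambda>\<gamma>. dop c (dop d (monomial \<gamma>))))"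
    by (intro deg_bounded_op_coeffs dop_in_polys_upto monomial_in_polys_upto order_refl)
  fix p assume p: "p \<in> polys" and "dop (op_coeffs (\<lambda>\<gamma>. dop c (dop d (monomial \<gamma>)))) p = 0"
  then have "dop c (dop d p) = 0" using \<open>deg_bounded d\<close> by (simp add: dop_op_coeffs_comp)
  then have "dop d p = 0" using c dop_in_polys[OF \<open>deg_bounded d\<close> p] by (simp add: Dset_iff)
  then show "p = 0" using d p by (simp add: Dset_iff)
qed

lemma Dmul_eqI:
  assumes "e \<in> Dset" "\<And>p. p \<in> polys \<Longrightarrow> dop e p = dop c (dop d p)"
  shows "Dmul c d = e"
  unfolding Dmul_def
proof (rule the_equality)
  show "e \<in> Dset \<and> (\<forall>p\<in>polys. dop e p = dop c (dop d p))" using assms by blast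
  fix e' assume "e' \<in> Dset \<and> (\<forall>p\<in>polys. dop e' p = dop c (dop d p))"
  then show "e' = e" using assms by (intro coeffs_eqI) auto
qed

lemma Dmul_eq_op_coeffs:
  "c \<in> Dset \<Longrightarrow> d \<in> Dset \<Longrightarrow> Dmul c d = op_coeffs (\<lambda>\<gamma>. dop c (dop d (monomial \<gamma>)))"
  by (intro Dmul_eqI op_coeffs_comp_in_Dset dop_op_coeffs_comp) (auto simp: Dset_iff)

lemma Dmul_in_Dset: "c \<in> Dset \<Longrightarrow> d \<in> Dset \<Longrightarrow> Dmul c d \<in> Dset"
  by (simp add: Dmul_eq_op_coeffs op_coeffs_comp_in_Dset)

lemma dop_Dmul: "c \<in> Dset \<Longrightarrow> d \<in> Dset \<Longrightarrow> p \<in> polys \<Longrightarrow> dop (Dmul c d) p = dop c (dop d p)"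
  by (simp add: Dmul_eq_op_coeffs dop_op_coeffs_comp Dset_iff)

lemma Did_altdef: "Did a = (if a = 0 then monomial 0 else 0)"
  by (auto simp: Did_def monomial_def zero_fun_def)

lemma monomial_times_monomial_zero: "monomial_times m (monomial 0) = monomial m"
proof
  fix g
  have "m \<le> g \<and> g - m = 0 \<longleftrightarrow> g = m"
    by (metis add_0 mi_diff_add mi_diff_self order_refl)
  then show "monomial_times m (monomial 0) g = monomial m g"
    by (auto simp: monomial_times_def monomial_def)
qed

lemma dop_Did_monomial: "dop Did (monomial \<gamma>) = monomial \<gamma>"
proof
  fix g
  have "dop Did (monomial \<gamma>) g = (\<Sum>a | a \<le> \<gamma>. if a = 0 then monomial \<gamma> g else 0)"
    unfolding dop_monomial
    by (intro sum.cong refl) (auto simp: Did_altdef monomial_times_monomial_zero)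
  then show "dop Did (monomial \<gamma>) g = monomial \<gamma> g" by simp
qed

lemma dop_Did: "p \<in> polys \<Longrightarrow> dop Did p = p"
proof
  fix g assume "p \<in> polys"
  then obtain k where k: "p \<in> polys_upto k" by (rule polys_in_polys_upto)
  show "dop Did p g = p g"
    by (simp add: dop_expand[OF k] dop_Did_monomial sum_monomial_expansion[OF k])
qed

lemma Did_in_Dset: "Did \<in> Dset"
  unfolding Dset_iff deg_bounded_def
proof (intro conjI allI ballI impI)
  show "Did a \<in> polys_upto (mdeg a)" for a
    by (simp add: Did_altdef monomial_in_polys_upto)
  show "p = 0" if "p \<in> polys" "dop Did p = 0" for p
    using that by (simp add: dop_Did)
qed

lemma Did_Dmul:
  fixes c :: "('n::finite) mi \<Rightarrow> 'n mi \<Rightarrow> real"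
  assumes "c \<in> Dset"
  shows "Dmul Did c = c"
proof (rule Dmul_eqI[OF assms])
  fix p :: "'n mi \<Rightarrow> real" assume "p \<in> polys"
  then have "dop c p \<in> polys" using assms by (simp add: Dset_iff dop_in_polys)
  then show "dop c p = dop Did (dop c p)" by (simp add: dop_Did)
qed

lemma Dmul_assoc:
  fixes x y z :: "('n::finite) mi \<Rightarrow> 'n mi \<Rightarrow> real"
  assumes x: "x \<in> Dset" and y: "y \<in> Dset" and z: "z \<in> Dset"
  shows "Dmul (Dmul x y) z = Dmul x (Dmul y z)"
proof (rule coeffs_eqI)
  fix p :: "'n mi \<Rightarrow> real" assume p: "p \<in> polys"
  have "dop z p \<in> polys" using z p by (simp add: Dset_iff dop_in_polys)
  then show "dop (Dmul (Dmul x y) z) p = dop (Dmul x (Dmul y z)) p"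
    using x y z p by (simp add: Dmul_in_Dset dop_Dmul)
qed

section \<open>Inversion on the spaces of polynomials of bounded degree\<close>

definition mis_list :: "nat \<Rightarrow> ('n::finite) mi list" where
  "mis_list k = (SOME xs. distinct xs \<and> set xs = mis_upto k)"

lemma mis_list:
  "distinct (mis_list k :: ('n::finite) mi list) \<and> set (mis_list k :: 'n mi list) = mis_upto k"
proof -
  have "\<exists>xs. distinct xs \<and> set xs = (mis_upto k :: 'n mi set)"
    using finite_distinct_list[OF finite_mis_upto] by blast
  then show ?thesis unfolding mis_list_def by (rule someI_ex)
qed

lemma distinct_mis_list: "distinct (mis_list k)"
  by (rule conjunct1[OF mis_list])

lemma set_mis_list [simp]: "set (mis_list k) = mis_upto k"
  by (rule conjunct2[OF mis_list])

lemma sum_mis_list: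
  fixes f :: "('n::finite) mi \<Rightarrow> 'b::comm_monoid_add"
  shows "(\<Sum>i<length (mis_list k :: 'n mi list). f (mis_list k ! i)) = (\<Sum>b\<in>mis_upto k. f b)"
  by (rule sum.reindex_bij_betw[OF bij_betw_nth[OF distinct_mis_list refl set_mis_list[symmetric]]])

lemma mis_list_nth_in_mis_upto:
  "i < length (mis_list k :: ('n::finite) mi list) \<Longrightarrow> (mis_list k :: 'n mi list) ! i \<in> mis_upto k"
  using nth_mem[of i "mis_list k :: 'n mi list"] by simp

definition vec_of_poly :: "nat \<Rightarrow> (('n::finite) mi \<Rightarrow> real) \<Rightarrow> real vec" where
  "vec_of_poly k p = vec (length (mis_list k :: 'n mi list)) (\<lambda>i. p (mis_list k ! i))"

definition poly_of_vec :: "nat \<Rightarrow> real vec \<Rightarrow> ('n::finite) mi \<Rightarrow> real" where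
  "poly_of_vec k v =
     (\<lambda>h. \<Sum>i<length (mis_list k :: 'n mi list). v $ i * monomial (mis_list k ! i) h)"

lemma vec_of_poly_carrier [simp]:
  fixes p :: "('n::finite) mi \<Rightarrow> real"
  shows "vec_of_poly k p \<in> carrier_vec (length (mis_list k :: 'n mi list))"
  by (simp add: vec_of_poly_def)

lemma poly_of_vec_in_polys_upto: "poly_of_vec k v \<in> polys_upto k"
  unfolding poly_of_vec_def using mis_list_nth_in_mis_upto
  by (intro polys_upto_sum monomial_in_polys_upto) (auto simp: mis_upto_def)

lemma poly_of_vec_of_poly:
  assumes "p \<in> polys_upto k"
  shows "poly_of_vec k (vec_of_poly k p) = p"
proof
  fix h
  show "poly_of_vec k (vec_of_poly k p) h = p h"
    using sum_mis_list[of "\<lambda>b. p b * monomial b h" k]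
    by (simp add: poly_of_vec_def vec_of_poly_def sum_monomial_expansion[OF assms])
qed

lemma vec_of_poly_of_vec:
  fixes v :: "real vec"
  assumes "v \<in> carrier_vec (length (mis_list k :: ('n::finite) mi list))"
  shows "vec_of_poly k (poly_of_vec k v :: 'n mi \<Rightarrow> real) = v"
proof (rule eq_vecI)
  let ?xs = "mis_list k :: 'n mi list"
  fix j assume "j < dim_vec v"
  then have j: "j < length ?xs" using assms by simp
  have "(\<Sum>i<length ?xs. v $ i * monomial (?xs ! i) (?xs ! j)) = (\<Sum>i<length ?xs. if i = j then v $ j else 0)"
    by (intro sum.cong refl)
      (use nth_eq_iff_index_eq[OF distinct_mis_list j] in \<open>auto simp: monomial_def\<close>)
  then show "vec_of_poly k (poly_of_vec k v :: 'n mi \<Rightarrow> real) $ j = v $ j"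
    using j by (simp add: vec_of_poly_def poly_of_vec_def)
qed (use assms in \<open>simp add: vec_of_poly_def\<close>)

definition dop_matrix :: "(('n::finite) mi \<Rightarrow> 'n mi \<Rightarrow> real) \<Rightarrow> nat \<Rightarrow> real mat" where
  "dop_matrix c k = mat (length (mis_list k :: 'n mi list)) (length (mis_list k :: 'n mi list))
     (\<lambda>(i, j). dop c (monomial (mis_list k ! j)) (mis_list k ! i))"

lemma dop_matrix_carrier [simp]:
  fixes c :: "('n::finite) mi \<Rightarrow> 'n mi \<Rightarrow> real"
  shows "dop_matrix c k \<in> carrier_mat (length (mis_list k :: 'n mi list)) (length (mis_list k :: 'n mi list))"
  by (simp add: dop_matrix_def)

lemma dop_poly_of_vec:
  fixes c :: "('n::finite) mi \<Rightarrow> 'n mi \<Rightarrow> real"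
  assumes c: "deg_bounded c" and v: "v \<in> carrier_vec (length (mis_list k :: 'n mi list))"
  shows "dop c (poly_of_vec k v) = poly_of_vec k (dop_matrix c k *\<^sub>v v)"
proof -
  let ?N = "length (mis_list k :: 'n mi list)"
  have "vec_of_poly k (dop c (poly_of_vec k v)) = dop_matrix c k *\<^sub>v v"
  proof (rule eq_vecI)
    fix i assume "i < dim_vec (dop_matrix c k *\<^sub>v v)"
    then have i: "i < ?N" by (simp add: dop_matrix_def)
    have "dop c (poly_of_vec k v) (mis_list k ! i)
        = (\<Sum>j<?N. v $ j * dop c (monomial (mis_list k ! j)) (mis_list k ! i))"
      unfolding poly_of_vec_def using mis_list_nth_in_mis_upto
      by (intro dop_sum monomial_in_polys_upto) (auto simp: mis_upto_def)
    also have "\<dots> = (\<Sum>j<?N. dop_matrix c k $$ (i, j) * v $ j)"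
      using i by (simp add: dop_matrix_def mult.commute)
    also have "\<dots> = (dop_matrix c k *\<^sub>v v) $ i"
      by (rule index_mult_mat_vec_sum[OF dop_matrix_carrier v i, symmetric])
    finally show "vec_of_poly k (dop c (poly_of_vec k v)) $ i = (dop_matrix c k *\<^sub>v v) $ i"
      using i by (simp add: vec_of_poly_def)
  qed (simp add: vec_of_poly_def dop_matrix_def)
  then have "poly_of_vec k (vec_of_poly k (dop c (poly_of_vec k v)))
      = (poly_of_vec k (dop_matrix c k *\<^sub>v v) :: 'n mi \<Rightarrow> real)" by simp
  then show ?thesis
    by (simp add: poly_of_vec_of_poly[OF dop_in_polys_upto[OF c poly_of_vec_in_polys_upto]])
qed

lemma det_dop_matrix_nonzero:
  fixes c :: "('n::finite) mi \<Rightarrow> 'n mi \<Rightarrow> real"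
  assumes c: "c \<in> Dset"
  shows "det (dop_matrix c k) \<noteq> 0"
proof
  let ?N = "length (mis_list k :: 'n mi list)"
  assume "det (dop_matrix c k) = 0"
  then obtain v where v: "v \<in> carrier_vec ?N" "v \<noteq> 0\<^sub>v ?N" "dop_matrix c k *\<^sub>v v = 0\<^sub>v ?N"
    using det_0_iff_vec_prod_zero[OF dop_matrix_carrier] by blast
  have "dop c (poly_of_vec k v) = poly_of_vec k (0\<^sub>v ?N)"
    using c v by (simp add: Dset_iff dop_poly_of_vec)
  also have "\<dots> = 0" by (simp add: poly_of_vec_def fun_eq_iff)
  finally have "dop c (poly_of_vec k v) = 0" .
  moreover have "poly_of_vec k v \<in> polys"
    using poly_of_vec_in_polys_upto polys_upto_subset_polys by blast
  ultimately have "poly_of_vec k v = (0 :: 'n mi \<Rightarrow> real)" using c unfolding Dset_iff by blast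
  then have "v = vec_of_poly k (0 :: 'n mi \<Rightarrow> real)" using vec_of_poly_of_vec[OF v(1)] by simp
  then show False using v(2) by (simp add: vec_of_poly_def zero_vec_def)
qed

definition dop_solve :: "(('n::finite) mi \<Rightarrow> 'n mi \<Rightarrow> real) \<Rightarrow> nat \<Rightarrow> ('n mi \<Rightarrow> real) \<Rightarrow> 'n mi \<Rightarrow> real" where
  "dop_solve c k q = poly_of_vec k
     ((1 / det (dop_matrix c k)) \<cdot>\<^sub>v (adj_mat (dop_matrix c k) *\<^sub>v vec_of_poly k q))"

lemma dop_solve_in_polys_upto: "dop_solve c k q \<in> polys_upto k"
  by (simp add: dop_solve_def poly_of_vec_in_polys_upto)

lemma dop_dop_solve:
  fixes c :: "('n::finite) mi \<Rightarrow> 'n mi \<Rightarrow> real"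
  assumes c: "c \<in> Dset" and q: "q \<in> polys_upto k"
  shows "dop c (dop_solve c k q) = q"
proof -
  let ?N = "length (mis_list k :: 'n mi list)"
  let ?A = "dop_matrix c k" and ?w = "vec_of_poly k q"
  let ?v = "(1 / det ?A) \<cdot>\<^sub>v (adj_mat ?A *\<^sub>v ?w)"
  have A: "?A \<in> carrier_mat ?N ?N" by simp
  have adj_w: "adj_mat ?A *\<^sub>v ?w \<in> carrier_vec ?N" using adj_mat(1)[OF A] by simp
  have "?A *\<^sub>v (adj_mat ?A *\<^sub>v ?w) = det ?A \<cdot>\<^sub>v ?w"
    using assoc_mult_mat_vec[OF A adj_mat(1)[OF A] vec_of_poly_carrier]
    by (simp add: adj_mat(2)[OF A] smult_one_mat_mult_vec)
  then have "?A *\<^sub>v ?v = ?w"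
    using det_dop_matrix_nonzero[OF c] by (simp add: mult_mat_vec[OF A adj_w] smult_smult_assoc)
  moreover have "deg_bounded c" using c by (simp add: Dset_iff)
  ultimately have "dop c (dop_solve c k q) = poly_of_vec k ?w"
    unfolding dop_solve_def using dop_poly_of_vec[of c ?v] adj_w by simp
  then show ?thesis by (simp add: poly_of_vec_of_poly[OF q])
qed

definition Dinv :: "(('n::finite) mi \<Rightarrow> 'n mi \<Rightarrow> real) \<Rightarrow> 'n mi \<Rightarrow> 'n mi \<Rightarrow> real" where
  "Dinv c = op_coeffs (\<lambda>\<gamma>. dop_solve c (mdeg \<gamma>) (monomial \<gamma>))"

lemma dop_dop_Dinv:
  assumes c: "c \<in> Dset" and p: "p \<in> polys"
  shows "dop c (dop (Dinv c) p) = p"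
proof
  fix g
  obtain k where k: "p \<in> polys_upto k" using p by (rule polys_in_polys_upto)
  have solve: "dop_solve c (mdeg b) (monomial b) \<in> polys_upto k" if "b \<in> mis_upto k" for b
    using polys_upto_mono[of "mdeg b" k] dop_solve_in_polys_upto that by (auto simp: mis_upto_def)
  have "dop c (dop (Dinv c) p) g
      = dop c (\<lambda>h. \<Sum>b\<in>mis_upto k. p b * dop_solve c (mdeg b) (monomial b) h) g"
    by (simp add: Dinv_def dop_expand[OF k] dop_op_coeffs_monomial)
  also have "\<dots> = (\<Sum>b\<in>mis_upto k. p b * dop c (dop_solve c (mdeg b) (monomial b)) g)"
    by (rule dop_sum[OF finite_mis_upto solve])
  also have "\<dots> = (\<Sum>b\<in>mis_upto k. p b * monomial b g)"
    using c by (simp add: dop_dop_solve monomial_in_polys_upto)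
  also have "\<dots> = p g" by (rule sum_monomial_expansion[OF k])
  finally show "dop c (dop (Dinv c) p) g = p g" .
qed

lemma Dinv_in_Dset:
  assumes c: "c \<in> Dset"
  shows "Dinv c \<in> Dset"
  unfolding Dset_iff
proof (intro conjI ballI impI)
  show "deg_bounded (Dinv c)"
    unfolding Dinv_def by (intro deg_bounded_op_coeffs dop_solve_in_polys_upto)
  fix p assume "p \<in> polys" "dop (Dinv c) p = 0"
  then show "p = 0" using dop_dop_Dinv[OF c, of p] by simp
qed

lemma dop_Dinv_dop:
  assumes c: "c \<in> Dset" and p: "p \<in> polys"
  shows "dop (Dinv c) (dop c p) = p"
proof -
  obtain k where k: "p \<in> polys_upto k" using p by (rule polys_in_polys_upto)
  have cp: "dop c p \<in> polys_upto k" using c k by (simp add: Dset_iff dop_in_polys_upto)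
  have r: "dop (Dinv c) (dop c p) \<in> polys_upto k"
    using Dinv_in_Dset[OF c] cp by (simp add: Dset_iff dop_in_polys_upto)
  have "dop c p \<in> polys" using cp polys_upto_subset_polys by blast
  then have "dop c (dop (Dinv c) (dop c p) - p) = 0"
    by (simp add: dop_diff[OF r k] dop_dop_Dinv[OF c])
  moreover have "dop (Dinv c) (dop c p) - p \<in> polys"
    using polys_upto_diff[OF r k] polys_upto_subset_polys by blast
  ultimately have "dop (Dinv c) (dop c p) - p = 0" using c unfolding Dset_iff by blast
  then show ?thesis by simp
qed

lemma Dmul_Dinv: "c \<in> Dset \<Longrightarrow> Dmul (Dinv c) c = Did"
  by (rule Dmul_eqI[OF Did_in_Dset]) (simp add: dop_Did dop_Dinv_dop)

lemma group_Dgroup: "group Dgroup"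
proof (rule groupI)
  show "x \<otimes>\<^bsub>Dgroup\<^esub> y \<in> carrier Dgroup" if "x \<in> carrier Dgroup" "y \<in> carrier Dgroup" for x y
    using that by (simp add: Dgroup_def Dmul_in_Dset)
  show "\<one>\<^bsub>Dgroup\<^esub> \<in> carrier Dgroup"
    by (simp add: Dgroup_def Did_in_Dset)
  show "x \<otimes>\<^bsub>Dgroup\<^esub> y \<otimes>\<^bsub>Dgroup\<^esub> z = x \<otimes>\<^bsub>Dgroup\<^esub> (y \<otimes>\<^bsub>Dgroup\<^esub> z)"
    if "x \<in> carrier Dgroup" "y \<in> carrier Dgroup" "z \<in> carrier Dgroup" for x y z
    using that by (simp add: Dgroup_def Dmul_assoc)
  show "\<one>\<^bsub>Dgroup\<^esub> \<otimes>\<^bsub>Dgroup\<^esub> x = x" if "x \<in> carrier Dgroup" for x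
    using that by (simp add: Dgroup_def Did_Dmul)
  show "\<exists>y\<in>carrier Dgroup. y \<otimes>\<^bsub>Dgroup\<^esub> x = \<one>\<^bsub>Dgroup\<^esub>" if "x \<in> carrier Dgroup" for x
    using that Dinv_in_Dset Dmul_Dinv by (auto simp: Dgroup_def)
qed

lemma inv_Dgroup:
  assumes "c \<in> Dset"
  shows "inv\<^bsub>Dgroup\<^esub> c = Dinv c"
proof (rule group.inv_equality[OF group_Dgroup])
  show "Dinv c \<otimes>\<^bsub>Dgroup\<^esub> c = \<one>\<^bsub>Dgroup\<^esub>" using assms by (simp add: Dgroup_def Dmul_Dinv)
  show "c \<in> carrier Dgroup" using assms by (simp add: Dgroup_def)
  show "Dinv c \<in> carrier Dgroup" using assms by (simp add: Dgroup_def Dinv_in_Dset)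
qed

section \<open>Continuity of multiplication and inversion\<close>

lemma continuous_on_monomial_times:
  "(\<And>h. continuous_on S (\<lambda>x. q x h)) \<Longrightarrow> continuous_on S (\<lambda>x. monomial_times m (q x) g)"
  by (cases "m \<le> g") (simp_all add: monomial_times_def)

lemma continuous_on_dop_monomial:
  assumes "continuous_on S f"
  shows "continuous_on S (\<lambda>x. dop (f x) (monomial \<gamma>) g)"
proof -
  have coord: "continuous_on S (\<lambda>x. f x a h)" for a h
    by (rule continuous_on_coordinate2[OF assms])
  show ?thesis unfolding dop_monomial
    by (intro continuous_on_sum continuous_on_mult continuous_on_const continuous_on_monomial_times
        coord)
qed

lemma continuous_on_op_coeffs:
  assumes "\<And>\<gamma> \<delta>. continuous_on S (\<lambda>x. M x \<gamma> \<delta>)"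
  shows "continuous_on S (\<lambda>x. op_coeffs (M x))"
proof -
  have coord: "continuous_on S (\<lambda>x. op_coeffs (M x) \<gamma> g)" for \<gamma> g
  proof (induction \<gamma> arbitrary: g rule: mi_less_induct)
    case (less \<gamma>)
    have "continuous_on S (\<lambda>x. (M x \<gamma> g - (\<Sum>a | a < \<gamma>.
        falling_fact \<gamma> a * monomial_times (\<gamma> - a) (op_coeffs (M x) a) g)) / mi_fact \<gamma>)"
      using mi_fact_pos[of \<gamma>]
      by (intro continuous_on_divide continuous_on_diff continuous_on_sum continuous_on_mult
          continuous_on_const continuous_on_monomial_times assms less.IH) auto
    then show ?case by (subst op_coeffs.simps) simp
  qed
  show ?thesis by (intro continuous_on_coordinatewise_then_product coord)
qed

lemma continuous_on_Dmul: "continuous_on (Dset \<times> Dset) (\<lambda>(c, d). Dmul c d)"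
proof -
  have "continuous_on (Dset \<times> Dset) (\<lambda>x. dop (fst x) (dop (snd x) (monomial \<gamma>)) \<delta>)" for \<gamma> \<delta>
  proof (rule continuous_on_eq)
    show "continuous_on (Dset \<times> Dset)
        (\<lambda>x. \<Sum>b\<in>mis_upto (mdeg \<gamma>). dop (snd x) (monomial \<gamma>) b * dop (fst x) (monomial b) \<delta>)"
      by (intro continuous_on_sum continuous_on_mult continuous_on_dop_monomial continuous_on_fst
          continuous_on_snd continuous_on_id)
    show "(\<Sum>b\<in>mis_upto (mdeg \<gamma>). dop (snd x) (monomial \<gamma>) b * dop (fst x) (monomial b) \<delta>)
        = dop (fst x) (dop (snd x) (monomial \<gamma>)) \<delta>" if "x \<in> Dset \<times> Dset" for x
      using that by (auto simp: Dset_iff dop_expand[OF dop_monomial_in_polys_upto])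
  qed
  then have "continuous_on (Dset \<times> Dset) (\<lambda>x. op_coeffs (\<lambda>\<gamma>. dop (fst x) (dop (snd x) (monomial \<gamma>))))"
    by (rule continuous_on_op_coeffs)
  then show ?thesis by (rule continuous_on_eq) (auto simp: Dmul_eq_op_coeffs)
qed

lemma continuous_on_dop_solve:
  "continuous_on Dset (\<lambda>c :: ('n::finite) mi \<Rightarrow> 'n mi \<Rightarrow> real. dop_solve c k q h)"
proof -
  let ?N = "length (mis_list k :: 'n mi list)"
  let ?A = "\<lambda>c :: 'n mi \<Rightarrow> 'n mi \<Rightarrow> real. dop_matrix c k"
  have A: "continuous_on Dset (\<lambda>c. ?A c $$ (i, j))" if "i < ?N" "j < ?N" for i j
    using that by (intro continuous_on_eq[OF continuous_on_dop_monomial[OF continuous_on_id]])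
      (simp add: dop_matrix_def)
  have entry: "((1 / det (?A c)) \<cdot>\<^sub>v (adj_mat (?A c) *\<^sub>v vec_of_poly k q)) $ i
      = (1 / det (?A c)) * (\<Sum>j<?N. adj_mat (?A c) $$ (i, j) * q (mis_list k ! j))" if "i < ?N" for c i
  proof -
    have "(adj_mat (?A c) *\<^sub>v vec_of_poly k q) $ i
        = (\<Sum>j<?N. adj_mat (?A c) $$ (i, j) * vec_of_poly k q $ j)"
      by (rule index_mult_mat_vec_sum[OF adj_mat(1)[OF dop_matrix_carrier] vec_of_poly_carrier that])
    then show ?thesis using that adj_mat(1)[OF dop_matrix_carrier[of c k]]
      by (simp add: vec_of_poly_def)
  qed
  have "continuous_on Dset (\<lambda>c. (1 / det (?A c)) * (\<Sum>j<?N. adj_mat (?A c) $$ (i, j) * q (mis_list k ! j)))"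
    if "i < ?N" for i
    using that det_dop_matrix_nonzero
    by (intro continuous_on_mult continuous_on_divide continuous_on_sum continuous_on_const
        continuous_on_det continuous_on_adj_mat A dop_matrix_carrier) auto
  then show ?thesis
    unfolding dop_solve_def poly_of_vec_def
    by (intro continuous_on_sum continuous_on_mult continuous_on_const)
      (simp add: entry cong: continuous_on_cong)
qed

lemma continuous_on_Dinv: "continuous_on Dset Dinv"
  unfolding Dinv_def[abs_def]
  by (intro continuous_on_op_coeffs continuous_on_dop_solve)

theorem lemma3p2:
  shows "(\<forall>c\<in>(Dset :: (('n::finite) mi \<Rightarrow> 'n mi \<Rightarrow> real) set). \<forall>d\<in>Dset.
            (\<forall>p\<in>polys. dop c p = dop d p) \<longrightarrow> c = d)
       \<and> (\<forall>c\<in>(Dset :: ('n mi \<Rightarrow> 'n mi \<Rightarrow> real) set). \<forall>d\<in>Dset.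
            Dmul c d \<in> Dset \<and> (\<forall>p\<in>polys. dop (Dmul c d) p = dop c (dop d p)))
       \<and> group (Dgroup :: ('n mi \<Rightarrow> 'n mi \<Rightarrow> real) monoid)
       \<and> continuous_on (Dset \<times> Dset) (\<lambda>(c, d). Dmul c d :: 'n mi \<Rightarrow> 'n mi \<Rightarrow> real)
       \<and> continuous_on Dset (\<lambda>c. inv\<^bsub>(Dgroup :: ('n mi \<Rightarrow> 'n mi \<Rightarrow> real) monoid)\<^esub> c)"
proof -
  have "continuous_on Dset (\<lambda>c. inv\<^bsub>(Dgroup :: ('n mi \<Rightarrow> 'n mi \<Rightarrow> real) monoid)\<^esub> c)"
    using continuous_on_Dinv by (rule continuous_on_eq) (simp add: inv_Dgroup)
  then show ?thesis
    using coeffs_eqI Dmul_in_Dset dop_Dmul group_Dgroup continuous_on_Dmul by blast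
qed

end
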